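(* In the setting where $\hat U,\tilde U:(0,1]\to GL_n(\mathbb F)$ ($\mathbb F\in\{\mathbb R,\mathbb C\}$) are continuous, $\hat U$ contracts the algebra with structure constants $c^k_{ij}$ to the algebra with structure constants $\hat c^k_{ij}$, and $\tilde U$ contracts the latter to the algebra with structure constants $\tilde c^k_{ij}$: if each function $\tilde g^{k'i''j''}_{i'j'k''}(\tilde\varepsilon)=(\tilde U_{\tilde\varepsilon})^{i''}_{i'}(\tilde U_{\tilde\varepsilon})^{j''}_{j'}(\tilde U^{-1}_{\tilde\varepsilon})^{k'}_{k''}$ is bounded as $\tilde\varepsilon\to0^+$, then $U_{\hat\varepsilon,\tilde\varepsilon}=\hat U_{\hat\varepsilon}\tilde U_{\tilde\varepsilon}$ gives a two-parametric contraction, i.e. $\lim_{(\hat\varepsilon,\tilde\varepsilon)\to(0^+,0^+)}(U)^i_{i'}(U)^j_{j'}(U^{-1})^{k'}_kc^k_{ij}=\tilde c^{k'}_{i'j'}$ for all indices.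
   Context: A continuous $U:(0,1]\to GL_n(\mathbb F)$ contracts the algebra with structure constants $c^k_{ij}$ (in a fixed basis) to the algebra with structure constants $c'^{k'}_{i'j'}$ if $\lim_{\varepsilon\to0^+}(U_\varepsilon)^i_{i'}(U_\varepsilon)^j_{j'}(U^{-1}_\varepsilon)^{k'}_kc^k_{ij}=c'^{k'}_{i'j'}$ for all indices (summation over repeated indices). *)

theory Defs
  imports "HOL-Analysis.Analysis"
begin

text \<open>Structure constants in a fixed basis indexed by the finite type 'n:
  c i j k stands for c^k_{ij}.  A matrix U :: 'a^'n^'n has entries U $ r $ s,
  r = upper (row) index, s = lower (column) index, i.e. (U)^r_s = U $ r $ s.\<close>

type_synonym ('a, 'n) struct_consts = "'n \<Rightarrow> 'n \<Rightarrow> 'n \<Rightarrow> 'a"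

definition transformed_sc ::
  "('a::real_normed_field)^'n^'n \<Rightarrow> ('a, 'n::finite) struct_consts \<Rightarrow> 'n \<Rightarrow> 'n \<Rightarrow> 'n \<Rightarrow> 'a" where
  "transformed_sc U c i' j' k' =
     (\<Sum>i\<in>UNIV. \<Sum>j\<in>UNIV. \<Sum>k\<in>UNIV.
        U $ i $ i' * U $ j $ j' * matrix_inv U $ k' $ k * c i j k)"

definition contracts ::
  "(real \<Rightarrow> ('a::real_normed_field)^'n^'n) \<Rightarrow> ('a, 'n::finite) struct_consts
     \<Rightarrow> ('a, 'n) struct_consts \<Rightarrow> bool" where
  "contracts U c c' \<longleftrightarrow>
     continuous_on {0<..1} U \<and> (\<forall>\<epsilon>\<in>{0<..1}. invertible (U \<epsilon>)) \<and>
     (\<forall>i' j' k'. ((\<lambda>\<epsilon>. transformed_sc (U \<epsilon>) c i' j' k') \<longlongrightarrow> c' i' j' k') (at_right 0))"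

end

theory Submission
  imports Defs
begin

text \<open>The transformation of structure constants is a right action of the matrix group:
  transforming by \<open>Uh ** Ut\<close> is transforming by \<open>Uh\<close> and then by \<open>Ut\<close>. Writing the
  constants produced by \<open>Uh eh\<close> as \<open>ch + d eh\<close> with \<open>d eh \<rightarrow> 0\<close>, linearity splits the
  two-parametric constants into the \<open>Ut et\<close>-transform of \<open>ch\<close>, which tends to \<open>ct\<close>, and
  the \<open>Ut et\<close>-transform of \<open>d eh\<close>. The latter is a finite sum of products of the
  coefficients of \<open>Ut et\<close>, bounded by hypothesis, with entries of \<open>d eh\<close>, so it tends to
  zero jointly in both parameters.\<close>

lemma
  fixes A :: "'a::semiring_1^'n^'m"
  assumes "invertible A"
  shows matrix_inv_right: "A ** matrix_inv A = mat 1"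
    and matrix_inv_left: "matrix_inv A ** A = mat 1"
proof -
  have "\<exists>A'. A ** A' = mat 1 \<and> A' ** A = mat 1"
    using assms unfolding invertible_def by blast
  then have "A ** matrix_inv A = mat 1 \<and> matrix_inv A ** A = mat 1"
    unfolding matrix_inv_def by (rule someI_ex)
  then show "A ** matrix_inv A = mat 1" "matrix_inv A ** A = mat 1" by auto
qed

lemma matrix_inv_unique:
  fixes A :: "'a::semiring_1^'n^'m" and X :: "'a^'m^'n"
  assumes "invertible A" "A ** X = mat 1"
  shows "matrix_inv A = X"
proof -
  have "matrix_inv A = matrix_inv A ** (A ** X)"
    using assms(2) by (simp add: matrix_mul_rid)
  also have "\<dots> = X"
    by (simp add: matrix_mul_assoc matrix_inv_left[OF assms(1)] matrix_mul_lid)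
  finally show ?thesis .
qed

lemma matrix_inv_mult:
  fixes A :: "'a::semiring_1^'n^'n" and B :: "'a^'n^'n"
  assumes "invertible A" "invertible B"
  shows "matrix_inv (A ** B) = matrix_inv B ** matrix_inv A"
proof (rule matrix_inv_unique)
  show "invertible (A ** B)"
    using assms by (rule invertible_mult)
  have "A ** B ** (matrix_inv B ** matrix_inv A) = A ** (B ** matrix_inv B) ** matrix_inv A"
    by (simp add: matrix_mul_assoc)
  then show "A ** B ** (matrix_inv B ** matrix_inv A) = mat 1"
    by (simp add: matrix_inv_right assms matrix_mul_rid)
qed

lemma sum_UNIV_triple:
  "(\<Sum>i\<in>UNIV. \<Sum>j\<in>UNIV. \<Sum>k\<in>UNIV. f i j k) =
     (\<Sum>(i, j, k)\<in>(UNIV::('a::finite \<times> 'b::finite \<times> 'c::finite) set). f i j k)"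
  by (simp add: sum.cartesian_product flip: UNIV_Times_UNIV)

lemma sum_product_triple:
  fixes f g h :: "_ \<Rightarrow> 'a::semiring_0"
  shows "sum f A * sum g B * sum h C = (\<Sum>a\<in>A. \<Sum>b\<in>B. \<Sum>d\<in>C. f a * g b * h d)"
  unfolding sum_product[of f A g B] unfolding sum_distrib_right unfolding sum_distrib_left ..

lemma transformed_sc_triple_sum:
  "transformed_sc U c i' j' k' =
     (\<Sum>(i, j, k)\<in>UNIV. U $ i $ i' * U $ j $ j' * matrix_inv U $ k' $ k * c i j k)"
  unfolding transformed_sc_def by (rule sum_UNIV_triple)

lemma transformed_sc_mult:
  fixes A B :: "'a::real_normed_field^'n::finite^'n"
  assumes "invertible A" "invertible B"
  shows "transformed_sc (A ** B) c = transformed_sc B (transformed_sc A c)"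
proof (intro ext)
  fix i' j' k'
  let ?A' = "matrix_inv A" and ?B' = "matrix_inv B"
  have "transformed_sc (A ** B) c i' j' k' =
      (\<Sum>(i, j, k)\<in>UNIV. (\<Sum>a\<in>UNIV. A $ i $ a * B $ a $ i') * (\<Sum>b\<in>UNIV. A $ j $ b * B $ b $ j')
         * (\<Sum>d\<in>UNIV. ?B' $ k' $ d * ?A' $ d $ k) * c i j k)"
    unfolding transformed_sc_triple_sum matrix_inv_mult[OF assms] by (simp add: matrix_matrix_mult_def)
  also have "\<dots> = (\<Sum>(i, j, k)\<in>UNIV. \<Sum>(a, b, d)\<in>UNIV.
      B $ a $ i' * B $ b $ j' * ?B' $ k' $ d * (A $ i $ a * A $ j $ b * ?A' $ d $ k * c i j k))"
    unfolding sum_product_triple unfolding sum_distrib_right sum_UNIV_triple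
    by (simp add: case_prod_unfold mult_ac)
  also have "\<dots> = (\<Sum>(a, b, d)\<in>UNIV. \<Sum>(i, j, k)\<in>UNIV.
      B $ a $ i' * B $ b $ j' * ?B' $ k' $ d * (A $ i $ a * A $ j $ b * ?A' $ d $ k * c i j k))"
    unfolding case_prod_unfold by (rule sum.swap)
  also have "\<dots> = transformed_sc B (transformed_sc A c) i' j' k'"
    by (simp add: transformed_sc_triple_sum sum_distrib_left case_prod_unfold)
  finally show "transformed_sc (A ** B) c i' j' k' = transformed_sc B (transformed_sc A c) i' j' k'" .
qed

lemma transformed_sc_diff:
  "transformed_sc U (\<lambda>i j k. c i j k - d i j k) i' j' k' =
     transformed_sc U c i' j' k' - transformed_sc U d i' j' k'"
  by (simp add: transformed_sc_def right_diff_distrib sum_subtractf)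

lemma Bfun_compose_filterlim:
  fixes g :: "'b \<Rightarrow> 'c::real_normed_vector"
  assumes "Bfun g G" "filterlim h G F"
  shows "Bfun (\<lambda>x. g (h x)) F"
proof -
  obtain K where "K > 0" "eventually (\<lambda>y. norm (g y) \<le> K) G"
    using assms(1) by (rule BfunE)
  then show ?thesis
    using assms(2) by (intro BfunI) (auto simp: filterlim_iff)
qed

lemma tendsto_transformed_sc_zero_prod:
  fixes U :: "'y \<Rightarrow> ('a::real_normed_field)^'n::finite^'n"
    and d :: "'x \<Rightarrow> ('a, 'n) struct_consts"
  assumes bounded: "\<And>i j k. Bfun (\<lambda>y. U y $ i $ i' * U y $ j $ j' * matrix_inv (U y) $ k' $ k) G"
    and vanishing: "\<And>i j k. ((\<lambda>x. d x i j k) \<longlongrightarrow> 0) F"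
  shows "((\<lambda>(x, y). transformed_sc (U y) (d x) i' j' k') \<longlongrightarrow> 0) (F \<times>\<^sub>F G)"
proof -
  have "((\<lambda>p. U (snd p) $ i $ i' * U (snd p) $ j $ j' * matrix_inv (U (snd p)) $ k' $ k
      * d (fst p) i j k) \<longlongrightarrow> 0) (F \<times>\<^sub>F G)" for i j k
  proof -
    have "Bfun (\<lambda>p. U (snd p) $ i $ i' * U (snd p) $ j $ j' * matrix_inv (U (snd p)) $ k' $ k) (F \<times>\<^sub>F G)"
      using bounded filterlim_snd by (rule Bfun_compose_filterlim)
    moreover have "Zfun (\<lambda>p. d (fst p) i j k) (F \<times>\<^sub>F G)"
      using filterlim_compose[OF vanishing filterlim_fst] by (simp add: tendsto_Zfun_iff)
    ultimately show ?thesis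
      by (simp add: tendsto_Zfun_iff bounded_bilinear.Bfun_prod_Zfun[OF bounded_bilinear_mult])
  qed
  then show ?thesis
    unfolding transformed_sc_def case_prod_unfold by (intro tendsto_null_sum)
qed

theorem mainTheorem10:
  fixes Uh Ut :: "real \<Rightarrow> ('a::real_normed_field)^'n::finite^'n"
    and c ch ct :: "('a, 'n) struct_consts"
  assumes "contracts Uh c ch"
    and "contracts Ut ch ct"
    and "\<And>i' j' k'' k' i'' j''.
           Bfun (\<lambda>\<epsilon>. Ut \<epsilon> $ i'' $ i' * Ut \<epsilon> $ j'' $ j' * matrix_inv (Ut \<epsilon>) $ k' $ k'')
                (at_right 0)"
  shows "\<forall>i' j' k'.
           ((\<lambda>(eh, et). transformed_sc (Uh eh ** Ut et) c i' j' k') \<longlongrightarrow> ct i' j' k')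
             (at_right 0 \<times>\<^sub>F at_right 0)"
proof (intro allI)
  fix i' j' k'
  have inv_h: "\<And>\<epsilon>. \<epsilon> \<in> {0<..1} \<Longrightarrow> invertible (Uh \<epsilon>)"
    and inv_t: "\<And>\<epsilon>. \<epsilon> \<in> {0<..1} \<Longrightarrow> invertible (Ut \<epsilon>)"
    and lim_h: "\<And>i j k. ((\<lambda>\<epsilon>. transformed_sc (Uh \<epsilon>) c i j k) \<longlongrightarrow> ch i j k) (at_right 0)"
    and lim_t: "((\<lambda>\<epsilon>. transformed_sc (Ut \<epsilon>) ch i' j' k') \<longlongrightarrow> ct i' j' k') (at_right 0)"
    using assms(1,2) unfolding contracts_def by auto
  have near_0: "\<forall>\<^sub>F \<epsilon> in at_right (0::real). \<epsilon> \<in> {0<..1}"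
    by (auto simp: eventually_at_right_field intro!: exI[of _ 1])
  let ?d = "\<lambda>eh i j k. transformed_sc (Uh eh) c i j k - ch i j k"
  have split: "\<forall>\<^sub>F (eh, et) in at_right 0 \<times>\<^sub>F at_right 0. transformed_sc (Uh eh ** Ut et) c i' j' k' =
      transformed_sc (Ut et) ch i' j' k' + transformed_sc (Ut et) (?d eh) i' j' k'"
    by (rule eventually_mono[OF eventually_prodI[OF near_0 near_0]])
      (auto simp: transformed_sc_mult transformed_sc_diff inv_h inv_t)
  have "((\<lambda>(eh, et). transformed_sc (Ut et) ch i' j' k') \<longlongrightarrow> ct i' j' k')
      (at_right 0 \<times>\<^sub>F at_right 0)"
    using filterlim_compose[OF lim_t filterlim_snd] by (simp add: case_prod_unfold)
  moreover have "((\<lambda>(eh, et). transformed_sc (Ut et) (?d eh) i' j' k') \<longlongrightarrow> 0)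
      (at_right 0 \<times>\<^sub>F at_right 0)"
    using assms(3) LIM_zero[OF lim_h] by (rule tendsto_transformed_sc_zero_prod)
  ultimately have "((\<lambda>(eh, et). transformed_sc (Ut et) ch i' j' k' + transformed_sc (Ut et) (?d eh) i' j' k')
      \<longlongrightarrow> ct i' j' k') (at_right 0 \<times>\<^sub>F at_right 0)"
    using tendsto_add[of _ "ct i' j' k'" _ _ 0] by (simp add: case_prod_unfold)
  with split show "((\<lambda>(eh, et). transformed_sc (Uh eh ** Ut et) c i' j' k') \<longlongrightarrow> ct i' j' k')
      (at_right 0 \<times>\<^sub>F at_right 0)"
    by (simp add: case_prod_unfold Lim_transform_eventually eventually_mono)
qed

end
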